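(* Let $(X,\mathcal A,\mu,\mu^{\otimes2},R,I,\Pi_R,G,E_0,\eta)$ be a pre-structural datum satisfying Axioms I and II, with $\mu(X)\le M<\infty$, and let $\eta\in[0,1)$. Let $\mathcal B$ be the Banach space of bounded finitely additive real-valued set functions $f:\mathcal A\to\mathbb R$ with norm $\|f\|_\infty=\sup_{B\in\mathcal A}|f(B)|$, and define $T_\eta:\mathcal B\to\mathcal B$ by $(T_\eta f)(B)=\mu(B)+\eta\,f(\Pi_R^{-1}(B))$ for $B\in\mathcal A$. Then the equation $f=T_\eta f$ has a unique solution $f_*\in\mathcal B$, given by \[f_*(B)=\mu(B)+\frac{\eta}{1-\eta}\,\mu(\Pi_R^{-1}(B))\qquad(B\in\mathcal A).\] Moreover $f_*\ge 0$ on $\mathcal A$, and for every $f_0\in\mathcal B$ the iterates $f_n:=T_\eta^n f_0$ satisfy $\|f_n-f_*\|_\infty\le\eta^n\|f_0-f_*\|_\infty$, so $f_n\to f_*$ in norm.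
   Context: For a nonempty set $X$, an algebra $\mathcal A\subseteq\mathcal P(X)$ contains $\varnothing,X$ and is closed under finite unions and complements. A finitely additive measure $\mu:\mathcal A\to[0,\infty)$ satisfies $\mu(\varnothing)=0$ and $\mu(B_1\sqcup B_2)=\mu(B_1)+\mu(B_2)$ for disjoint $B_1,B_2\in\mathcal A$. $\mathcal A\otimes\mathcal A$ denotes the algebra generated by rectangles $B_1\times B_2$, $B_i\in\mathcal A$. For relations $H,K\subseteq X\times X$, $H\circ K=\{(x,z):\exists y\,(x,y)\in H,(y,z)\in K\}$. A pre-structural datum is a tuple $(X,\mathcal A,\mu,\mu^{\otimes2},R,I,\Pi_R,G,E_0,\eta)$ where: $X$ nonempty; $\mathcal A$ an algebra on $X$; $\mu$ a finitely additive measure on $\mathcal A$; $\mu^{\otimes2}:\mathcal A\otimes\mathcal A\to[0,\infty)$ finitely additive with $\mu^{\otimes2}(B_1\times B_2)=\mu(B_1)\mu(B_2)$; $R,I\in\mathcal A$ disjoint; $\Pi_R:X\to R$ a map; $G\in\mathcal A\otimes\mathcal A$; $E_0\in(0,\infty)$; $\eta\in[0,1]$. Axiom I: $\Pi_R\circ\Pi_R=\Pi_R$, $\Pi_R(r)=r$ for all $r\in R$, and $\Pi_R^{-1}(B)\in\mathcal A$ for every $B\in\mathcal A$ with $B\subseteq R$ (hence $\Pi_R^{-1}(B)=\Pi_R^{-1}(B\cap R)\in\mathcal A$ for all $B\in\mathcal A$). Axiom II: $G$ is reflexive, symmetric, and $G\circ G=G$. *)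

theory Defs
  imports "HOL-Analysis.Analysis"
begin

definition preim :: "'a set \<Rightarrow> ('a \<Rightarrow> 'a) \<Rightarrow> 'a set \<Rightarrow> 'a set" where
  "preim X P B = {x \<in> X. P x \<in> B}"

definition prod_alg :: "'a set \<Rightarrow> 'a set set \<Rightarrow> ('a \<times> 'a) set set" where
  "prod_alg X A = \<Inter>{M. algebra (X \<times> X) M \<and> {B1 \<times> B2 | B1 B2. B1 \<in> A \<and> B2 \<in> A} \<subseteq> M}"

definition fa_measure :: "'b set set \<Rightarrow> ('b set \<Rightarrow> real) \<Rightarrow> bool" where
  "fa_measure M m \<longleftrightarrow> m {} = 0 \<and> (\<forall>B\<in>M. 0 \<le> m B) \<and> additive M m"

definition pre_structural_datum ::
  "'a set \<Rightarrow> 'a set set \<Rightarrow> ('a set \<Rightarrow> real) \<Rightarrow> (('a \<times> 'a) set \<Rightarrow> real)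
   \<Rightarrow> 'a set \<Rightarrow> 'a set \<Rightarrow> ('a \<Rightarrow> 'a) \<Rightarrow> ('a \<times> 'a) set \<Rightarrow> real \<Rightarrow> real \<Rightarrow> bool" where
  "pre_structural_datum X A \<mu> \<mu>2 R I P G E0 \<eta> \<longleftrightarrow>
     X \<noteq> {} \<and> algebra X A \<and> fa_measure A \<mu> \<and> fa_measure (prod_alg X A) \<mu>2 \<and>
     (\<forall>B1\<in>A. \<forall>B2\<in>A. \<mu>2 (B1 \<times> B2) = \<mu> B1 * \<mu> B2) \<and>
     R \<in> A \<and> I \<in> A \<and> R \<inter> I = {} \<and> (\<forall>x\<in>X. P x \<in> R) \<and>
     G \<in> prod_alg X A \<and> 0 < E0 \<and> 0 \<le> \<eta> \<and> \<eta> \<le> 1"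

definition axiom_I :: "'a set \<Rightarrow> 'a set set \<Rightarrow> 'a set \<Rightarrow> ('a \<Rightarrow> 'a) \<Rightarrow> bool" where
  "axiom_I X A R P \<longleftrightarrow> (\<forall>x\<in>X. P (P x) = P x) \<and> (\<forall>r\<in>R. P r = r) \<and>
     (\<forall>B\<in>A. B \<subseteq> R \<longrightarrow> preim X P B \<in> A)"

definition axiom_II :: "'a set \<Rightarrow> ('a \<times> 'a) set \<Rightarrow> bool" where
  "axiom_II X G \<longleftrightarrow> refl_on X G \<and> sym G \<and> G O G = G"

(* The space \<B> of bounded finitely additive real set functions on A
   (represented as functions on all sets; only values on A matter) *)
definition bfa :: "'a set set \<Rightarrow> ('a set \<Rightarrow> real) set" where
  "bfa A = {f. additive A f \<and> (\<exists>C. \<forall>B\<in>A. \<bar>f B\<bar> \<le> C)}"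

definition sup_norm :: "'a set set \<Rightarrow> ('a set \<Rightarrow> real) \<Rightarrow> real" where
  "sup_norm A f = (SUP B\<in>A. \<bar>f B\<bar>)"

definition T_op :: "'a set \<Rightarrow> ('a set \<Rightarrow> real) \<Rightarrow> ('a \<Rightarrow> 'a) \<Rightarrow> real
    \<Rightarrow> ('a set \<Rightarrow> real) \<Rightarrow> ('a set \<Rightarrow> real)" where
  "T_op X \<mu> P \<eta> f = (\<lambda>B. \<mu> B + \<eta> * f (preim X P B))"

end

theory Submission
  imports Defs
begin

text \<open>
  Write \<open>p B\<close> for the preimage of \<open>B\<close> under \<open>\<Pi>\<^sub>R\<close>. Since \<open>\<Pi>\<^sub>R\<close> is an idempotent map into
  \<open>R \<in> \<A>\<close>, \<open>p\<close> maps \<open>\<A>\<close> into itself, preserves disjoint unions and satisfies \<open>p \<circ> p = p\<close>.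
  Hence \<open>T\<^sub>\<eta> f = \<mu> + \<eta> (f \<circ> p)\<close> maps \<open>\<B>\<close> into itself and is an \<open>\<eta>\<close>-contraction for the sup
  norm, and idempotence of \<open>p\<close> turns the ansatz \<open>f = \<mu> + c (\<mu> \<circ> p)\<close> of the fixed point equation
  into \<open>c = \<eta> (1 + c)\<close>, i.e. \<open>c = \<eta>/(1 - \<eta>)\<close>.
\<close>

lemma abs_le_sup_norm:
  assumes "bdd_above ((\<lambda>B. \<bar>h B\<bar>) ` A)" "B \<in> A"
  shows "\<bar>h B\<bar> \<le> sup_norm A h"
  unfolding sup_norm_def using assms by (rule cSUP_upper2) simp

lemma sup_norm_le:
  assumes "A \<noteq> {}" "\<forall>B\<in>A. \<bar>h B\<bar> \<le> C"
  shows "sup_norm A h \<le> C"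
  unfolding sup_norm_def using assms by (intro cSUP_least) auto

lemma sup_norm_nonneg:
  assumes "bdd_above ((\<lambda>B. \<bar>h B\<bar>) ` A)" "A \<noteq> {}"
  shows "0 \<le> sup_norm A h"
proof -
  obtain B where "B \<in> A" using assms(2) by auto
  with abs_le_sup_norm[OF assms(1)] show ?thesis by force
qed

lemma sup_norm_cong: "(\<And>B. B \<in> A \<Longrightarrow> h B = k B) \<Longrightarrow> sup_norm A h = sup_norm A k"
  unfolding sup_norm_def by (rule SUP_cong) auto

lemma bfa_bdd_above: "f \<in> bfa A \<Longrightarrow> bdd_above ((\<lambda>B. \<bar>f B\<bar>) ` A)"
  unfolding bfa_def by (auto intro: bdd_aboveI2)

lemma bfa_add:
  assumes "f \<in> bfa A" "g \<in> bfa A"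
  shows "(\<lambda>B. f B + g B) \<in> bfa A"
proof -
  obtain C D where "\<forall>B\<in>A. \<bar>f B\<bar> \<le> C" "\<forall>B\<in>A. \<bar>g B\<bar> \<le> D"
    using assms unfolding bfa_def by blast
  then have "\<forall>B\<in>A. \<bar>f B + g B\<bar> \<le> C + D" by (smt (verit))
  moreover have "additive A (\<lambda>B. f B + g B)"
    using assms unfolding bfa_def additive_def by simp
  ultimately show ?thesis unfolding bfa_def by blast
qed

lemma bfa_scale:
  assumes "f \<in> bfa A"
  shows "(\<lambda>B. c * f B) \<in> bfa A"
proof -
  obtain C where "\<forall>B\<in>A. \<bar>f B\<bar> \<le> C" using assms unfolding bfa_def by blast
  then have "\<forall>B\<in>A. \<bar>c * f B\<bar> \<le> \<bar>c\<bar> * C" by (simp add: abs_mult mult_left_mono)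
  moreover have "additive A (\<lambda>B. c * f B)"
    using assms unfolding bfa_def additive_def by (simp add: distrib_left)
  ultimately show ?thesis unfolding bfa_def by blast
qed

lemma bfa_diff: "f \<in> bfa A \<Longrightarrow> g \<in> bfa A \<Longrightarrow> (\<lambda>B. f B - g B) \<in> bfa A"
  using bfa_add[of f A "\<lambda>B. -1 * g B"] bfa_scale[of g A "-1"] by simp

lemma fa_measure_le_space:
  assumes "algebra X A" "fa_measure A \<mu>" "B \<in> A"
  shows "\<mu> B \<le> \<mu> X"
proof -
  interpret algebra X A by fact
  have "X - B \<in> A" using assms(3) by auto
  moreover have "X = B \<union> (X - B)" using sets_into_space[OF assms(3)] by auto
  ultimately have "\<mu> X = \<mu> B + \<mu> (X - B)"
    using assms(2,3) unfolding fa_measure_def additive_def by (metis Diff_disjoint)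
  with \<open>X - B \<in> A\<close> assms(2) show ?thesis unfolding fa_measure_def by auto
qed

lemma fa_measure_in_bfa:
  assumes "algebra X A" "fa_measure A \<mu>"
  shows "\<mu> \<in> bfa A"
proof -
  have "\<forall>B\<in>A. \<bar>\<mu> B\<bar> \<le> \<mu> X"
    using fa_measure_le_space[OF assms] assms(2) unfolding fa_measure_def by auto
  with assms(2) show ?thesis unfolding bfa_def fa_measure_def by blast
qed

lemma bfa_comp_preim:
  assumes "\<forall>B\<in>A. preim X P B \<in> A" "f \<in> bfa A"
  shows "(\<lambda>B. f (preim X P B)) \<in> bfa A"
proof -
  have "preim X P (B1 \<union> B2) = preim X P B1 \<union> preim X P B2"
    and "B1 \<inter> B2 = {} \<Longrightarrow> preim X P B1 \<inter> preim X P B2 = {}" for B1 B2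
    unfolding preim_def by auto
  then have "additive A (\<lambda>B. f (preim X P B))"
    using assms unfolding bfa_def additive_def by simp
  moreover obtain C where "\<forall>B\<in>A. \<bar>f B\<bar> \<le> C" using assms(2) unfolding bfa_def by blast
  ultimately show ?thesis using assms(1) unfolding bfa_def by blast
qed

lemma preim_in_sets:
  assumes "algebra X A" "R \<in> A" "\<forall>x\<in>X. P x \<in> R" "axiom_I X A R P" "B \<in> A"
  shows "preim X P B \<in> A"
proof -
  interpret algebra X A by fact
  have "preim X P B = preim X P (B \<inter> R)" using assms(3) unfolding preim_def by auto
  moreover have "B \<inter> R \<in> A" using assms(2,5) by blast
  ultimately show ?thesis using assms(4) unfolding axiom_I_def by simp
qed

lemma preim_preim:
  assumes "\<forall>x\<in>X. P x \<in> X" "\<forall>x\<in>X. P (P x) = P x"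
  shows "preim X P (preim X P B) = preim X P B"
  using assms unfolding preim_def by auto

lemma funpow_in_bfa: "\<forall>f\<in>bfa A. T f \<in> bfa A \<Longrightarrow> f \<in> bfa A \<Longrightarrow> (T ^^ n) f \<in> bfa A"
  by (induction n) auto

context
  fixes A :: "'a set set" and T :: "('a set \<Rightarrow> real) \<Rightarrow> 'a set \<Rightarrow> real" and \<eta> :: real
  assumes T_bfa: "\<forall>f\<in>bfa A. T f \<in> bfa A"
    and contraction: "\<forall>f\<in>bfa A. \<forall>g\<in>bfa A.
      sup_norm A (\<lambda>B. T f B - T g B) \<le> \<eta> * sup_norm A (\<lambda>B. f B - g B)"
    and eta: "0 \<le> \<eta>"
begin

lemma contraction_funpow_dist:
  assumes "f \<in> bfa A" "g \<in> bfa A" "\<forall>B\<in>A. T g B = g B"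
  shows "sup_norm A (\<lambda>B. (T ^^ n) f B - g B) \<le> \<eta> ^ n * sup_norm A (\<lambda>B. f B - g B)"
proof (induction n)
  case (Suc n)
  have "sup_norm A (\<lambda>B. (T ^^ Suc n) f B - g B)
      = sup_norm A (\<lambda>B. T ((T ^^ n) f) B - T g B)"
    using assms(3) by (intro sup_norm_cong) simp
  also have "\<dots> \<le> \<eta> * sup_norm A (\<lambda>B. (T ^^ n) f B - g B)"
    using contraction funpow_in_bfa[OF T_bfa assms(1)] assms(2) by blast
  also have "\<dots> \<le> \<eta> * (\<eta> ^ n * sup_norm A (\<lambda>B. f B - g B))"
    using Suc eta by (rule mult_left_mono)
  finally show ?case by simp
qed simp

lemma contraction_fixed_point_unique:
  assumes "\<eta> < 1" "A \<noteq> {}" "f \<in> bfa A" "g \<in> bfa A"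
    and "\<forall>B\<in>A. T f B = f B" "\<forall>B\<in>A. T g B = g B"
  shows "\<forall>B\<in>A. f B = g B"
proof
  fix B assume "B \<in> A"
  let ?d = "sup_norm A (\<lambda>B. f B - g B)"
  have bdd: "bdd_above ((\<lambda>B. \<bar>f B - g B\<bar>) ` A)" using bfa_bdd_above[OF bfa_diff] assms(3,4) .
  have "?d = sup_norm A (\<lambda>B. T f B - T g B)" using assms(5,6) by (intro sup_norm_cong) simp
  also have "\<dots> \<le> \<eta> * ?d" using contraction assms(3,4) by blast
  finally have "(1 - \<eta>) * ?d \<le> 0" by (simp add: algebra_simps)
  then have "?d \<le> 0" using assms(1) by (simp add: mult_le_0_iff)
  then show "f B = g B" using abs_le_sup_norm[OF bdd \<open>B \<in> A\<close>] by simp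
qed

lemma contraction_funpow_tendsto:
  assumes "\<eta> < 1" "A \<noteq> {}" "f \<in> bfa A" "g \<in> bfa A" "\<forall>B\<in>A. T g B = g B"
  shows "(\<lambda>n. sup_norm A (\<lambda>B. (T ^^ n) f B - g B)) \<longlonglongrightarrow> 0"
proof (rule real_tendsto_sandwich)
  show "\<forall>\<^sub>F n in sequentially. 0 \<le> sup_norm A (\<lambda>B. (T ^^ n) f B - g B)"
    using sup_norm_nonneg[OF bfa_bdd_above[OF bfa_diff[OF funpow_in_bfa[OF T_bfa assms(3)] assms(4)]]
        assms(2)] by simp
  show "\<forall>\<^sub>F n in sequentially. sup_norm A (\<lambda>B. (T ^^ n) f B - g B)
      \<le> \<eta> ^ n * sup_norm A (\<lambda>B. f B - g B)"
    using contraction_funpow_dist[OF assms(3-5)] by simp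
  show "(\<lambda>n. \<eta> ^ n * sup_norm A (\<lambda>B. f B - g B)) \<longlonglongrightarrow> 0"
    using assms(1) eta by (intro tendsto_mult_left_zero LIMSEQ_power_zero) auto
qed simp

end

lemma T_op_in_bfa:
  assumes "\<forall>B\<in>A. preim X P B \<in> A" "\<mu> \<in> bfa A" "f \<in> bfa A"
  shows "T_op X \<mu> P \<eta> f \<in> bfa A"
  unfolding T_op_def by (intro bfa_add bfa_scale bfa_comp_preim assms)

lemma T_op_contraction:
  assumes "\<forall>B\<in>A. preim X P B \<in> A" "0 \<le> \<eta>" "A \<noteq> {}" "f \<in> bfa A" "g \<in> bfa A"
  shows "sup_norm A (\<lambda>B. T_op X \<mu> P \<eta> f B - T_op X \<mu> P \<eta> g B)
    \<le> \<eta> * sup_norm A (\<lambda>B. f B - g B)"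
proof (rule sup_norm_le[OF assms(3)], intro ballI)
  fix B assume "B \<in> A"
  have "\<bar>T_op X \<mu> P \<eta> f B - T_op X \<mu> P \<eta> g B\<bar> = \<eta> * \<bar>f (preim X P B) - g (preim X P B)\<bar>"
    unfolding T_op_def using assms(2) by (simp add: abs_mult flip: right_diff_distrib)
  also have "\<dots> \<le> \<eta> * sup_norm A (\<lambda>B. f B - g B)"
    using abs_le_sup_norm[OF bfa_bdd_above[OF bfa_diff[OF assms(4,5)]]] assms(1,2) \<open>B \<in> A\<close>
    by (simp add: mult_left_mono)
  finally show "\<bar>T_op X \<mu> P \<eta> f B - T_op X \<mu> P \<eta> g B\<bar> \<le> \<eta> * sup_norm A (\<lambda>B. f B - g B)" .
qed

lemma T_op_fixed_point:
  assumes "\<forall>x\<in>X. P x \<in> X" "\<forall>x\<in>X. P (P x) = P x" "\<eta> \<noteq> 1"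
  shows "T_op X \<mu> P \<eta> (\<lambda>B. \<mu> B + \<eta> / (1 - \<eta>) * \<mu> (preim X P B))
    = (\<lambda>B. \<mu> B + \<eta> / (1 - \<eta>) * \<mu> (preim X P B))"
  using assms(3) unfolding T_op_def preim_preim[OF assms(1,2)]
  by (auto simp: field_simps)

theorem theorem4p8:
  fixes X :: "'a set" and A :: "'a set set" and \<mu> :: "'a set \<Rightarrow> real"
    and \<mu>2 :: "('a \<times> 'a) set \<Rightarrow> real" and R I :: "'a set" and P :: "'a \<Rightarrow> 'a"
    and G :: "('a \<times> 'a) set" and E0 \<eta> M :: real
  assumes datum: "pre_structural_datum X A \<mu> \<mu>2 R I P G E0 \<eta>"
    and axI: "axiom_I X A R P"
    and axII: "axiom_II X G"
    and bound: "\<mu> X \<le> M"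
    and eta: "0 \<le> \<eta>" "\<eta> < 1"
  defines "fstar \<equiv> (\<lambda>B. \<mu> B + \<eta> / (1 - \<eta>) * \<mu> (preim X P B))"
  shows "(\<forall>f\<in>bfa A. T_op X \<mu> P \<eta> f \<in> bfa A)
    \<and> fstar \<in> bfa A
    \<and> (\<forall>B\<in>A. fstar B = T_op X \<mu> P \<eta> fstar B)
    \<and> (\<forall>f\<in>bfa A. (\<forall>B\<in>A. f B = T_op X \<mu> P \<eta> f B) \<longrightarrow> (\<forall>B\<in>A. f B = fstar B))
    \<and> (\<forall>B\<in>A. 0 \<le> fstar B)
    \<and> (\<forall>f0\<in>bfa A. \<forall>n. sup_norm A (\<lambda>B. (T_op X \<mu> P \<eta> ^^ n) f0 B - fstar B)
                          \<le> \<eta> ^ n * sup_norm A (\<lambda>B. f0 B - fstar B))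
    \<and> (\<forall>f0\<in>bfa A. (\<lambda>n. sup_norm A (\<lambda>B. (T_op X \<mu> P \<eta> ^^ n) f0 B - fstar B)) \<longlonglongrightarrow> 0)"
proof -
  let ?T = "T_op X \<mu> P \<eta>"
  have alg: "algebra X A" and \<mu>: "fa_measure A \<mu>" and "R \<in> A" and PR: "\<forall>x\<in>X. P x \<in> R"
    using datum unfolding pre_structural_datum_def by auto
  have P_idem: "\<forall>x\<in>X. P (P x) = P x" using axI unfolding axiom_I_def by simp
  interpret algebra X A by (fact alg)
  have "A \<noteq> {}" using top by auto
  have "\<forall>x\<in>X. P x \<in> X" using PR sets_into_space[OF \<open>R \<in> A\<close>] by auto
  have preim_A: "\<forall>B\<in>A. preim X P B \<in> A" using preim_in_sets[OF alg \<open>R \<in> A\<close> PR axI] by blast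
  have T_bfa: "\<forall>f\<in>bfa A. ?T f \<in> bfa A"
    using T_op_in_bfa[OF preim_A fa_measure_in_bfa[OF alg \<mu>]] by blast
  have contr: "\<forall>f\<in>bfa A. \<forall>g\<in>bfa A. sup_norm A (\<lambda>B. ?T f B - ?T g B) \<le> \<eta> * sup_norm A (\<lambda>B. f B - g B)"
    using T_op_contraction[OF preim_A eta(1) \<open>A \<noteq> {}\<close>] by blast
  have fstar_fixed: "?T fstar = fstar"
    unfolding fstar_def using T_op_fixed_point[OF \<open>\<forall>x\<in>X. P x \<in> X\<close> P_idem] eta(2) by simp
  have fstar_bfa: "fstar \<in> bfa A" unfolding fstar_def
    by (intro bfa_add bfa_scale bfa_comp_preim preim_A fa_measure_in_bfa[OF alg \<mu>])
  have "\<forall>B\<in>A. 0 \<le> fstar B"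
    using \<mu> preim_A eta unfolding fstar_def fa_measure_def by simp
  moreover have fstar_fixed_on_A: "\<forall>B\<in>A. ?T fstar B = fstar B" using fstar_fixed by simp
  moreover have "\<forall>B\<in>A. f B = fstar B" if "f \<in> bfa A" "\<forall>B\<in>A. f B = ?T f B" for f
    using that(2) by (intro contraction_fixed_point_unique[OF T_bfa contr eta \<open>A \<noteq> {}\<close> that(1)
        fstar_bfa _ fstar_fixed_on_A]) simp
  ultimately show ?thesis
    using T_bfa fstar_bfa contraction_funpow_dist[OF T_bfa contr eta(1) _ fstar_bfa fstar_fixed_on_A]
      contraction_funpow_tendsto[OF T_bfa contr eta \<open>A \<noteq> {}\<close> _ fstar_bfa fstar_fixed_on_A]
    by (intro conjI ballI allI impI) (simp_all only:)
qed

end
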